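(* Let $\mathcal{X}=\langle P,K,V\rangle$ be a polyhedral model. Every simplicial bisimulation $\sim\subseteq P\times P$ is included in logical equivalence: if $x\sim y$ then for every SLCS formula $\phi$, $\mathcal{X},x\models\phi\iff\mathcal{X},y\models\phi$.
   Context: A $d$-simplex $\sigma\subseteq\mathbb{R}^m$ is the convex hull of $d+1$ affinely independent points $v_0,\dots,v_d$ (its vertices); the simplexes spanned by subsets of the vertices (including the empty simplex) are its faces, and $\tau\preceq\sigma$ means $\tau$ is a face of $\sigma$. The relative interior of $\sigma$ is $\tilde\sigma=\{\sum_i\lambda_iv_i:\lambda_i\in(0,1],\sum_i\lambda_i=1\}$. A simplicial complex $K$ is a finite set of simplexes of $\mathbb{R}^m$ closed under taking faces and such that the intersection of any two of its simplexes is a face of both. Its polyhedron is $|K|=\bigcup K$, with the subspace topology of $\mathbb{R}^m$; $\mathcal{C}$ and $\mathcal{I}$ denote closure and interior in this space. The cells of $K$ are the sets $\tilde\sigma$ for nonempty $\sigma\in K$; they form a partition $\tilde K$ of $|K|$. A path in a space $P$ is a continuous $\pi:[0,1]\to P$; $\pi(S)=\{\pi(s):s\in S\}$. Fix a finite set $AP$ of atomic propositions. A polyhedral model is $\mathcal{X}=\langle P,K,V\rangle$ with $K$ a simplicial complex, $P=|K|$, and $V:AP\to\mathcal{P}(P)$ such that each $V(p)$ is a union of cells of $K$ ($K$ is then called coherent with the model). SLCS formulas: $\phi::=\top\mid p\mid\neg\phi\mid\phi\wedge\phi\mid\Box\phi\mid\gamma(\phi,\phi)$, $p\in AP$. Semantics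 at $x\in P$, with $[\![\phi]\!]=\{x\in P:\mathcal{X},x\models\phi\}$: $\top$ always holds; $x\models p$ iff $x\in V(p)$; Boolean connectives as usual; $x\models\Box\phi$ iff $x\in\mathcal{I}([\![\phi]\!])$; $x\models\gamma(\phi,\psi)$ iff there is a path $\pi$ in $P$ with $\pi(0)=x$, $\pi((0,1))\subseteq[\![\phi]\!]$ and $\pi(1)\in[\![\psi]\!]$. A path $\pi$ is simplicial (w.r.t. $K$) if there are $s_0=0<s_1<\dots<s_k=1$ and cells $\tilde\sigma_1,\dots,\tilde\sigma_k$ of $K$ with $\pi((s_{i-1},s_i))\subseteq\tilde\sigma_i$ for all $i$. For $R\subseteq P\times P$, paths satisfy $\pi_1\hat R\pi_2$ iff $\pi_1(t)\,R\,\pi_2(t)$ for all $t\in[0,1]$. A relation $\sim\subseteq P\times P$ is a simplicial bisimulation if whenever $x\sim y$: (1) for all $p\in AP$, $x\in V(p)\iff y\in V(p)$; (2) for every simplicial path $\pi_x$ with $\pi_x(0)=x$ there is a simplicial path $\pi_y$ with $\pi_y(0)=y$ and $\pi_x\hat\sim\pi_y$; (3) for every simplicial path $\pi_y$ with $\pi_y(0)=y$ there is a simplicial path $\pi_x$ with $\pi_x(0)=x$ and $\pi_x\hat\sim\pi_y$. *)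

theory Defs
  imports "HOL-Analysis.Analysis"
begin

definition is_simplex :: "'a::euclidean_space set \<Rightarrow> bool" where
  "is_simplex \<sigma> \<longleftrightarrow> (\<exists>V. finite V \<and> \<not> affine_dependent V \<and> \<sigma> = convex hull V)"

definition face_of_simplex :: "'a::euclidean_space set \<Rightarrow> 'a set \<Rightarrow> bool" where
  "face_of_simplex \<tau> \<sigma> \<longleftrightarrow>
     (\<exists>V W. finite V \<and> \<not> affine_dependent V \<and> \<sigma> = convex hull V \<and> W \<subseteq> V \<and> \<tau> = convex hull W)"

text \<open>Relative interior of a simplex, as in the paper:
  combinations with all coefficients in (0,1] summing to 1.\<close>
definition cell :: "'a::euclidean_space set \<Rightarrow> 'a set" where
  "cell \<sigma> = {x. \<exists>V l. finite V \<and> \<not> affine_dependent V \<and> \<sigma> = convex hull V \<and>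
       (\<forall>v\<in>V. 0 < l v \<and> l v \<le> 1) \<and> sum l V = 1 \<and> x = (\<Sum>v\<in>V. l v *\<^sub>R v)}"

definition simplicial_complex :: "'a::euclidean_space set set \<Rightarrow> bool" where
  "simplicial_complex K \<longleftrightarrow>
     finite K \<and> (\<forall>\<sigma>\<in>K. is_simplex \<sigma>) \<and>
     (\<forall>\<sigma>\<in>K. \<forall>\<tau>. face_of_simplex \<tau> \<sigma> \<longrightarrow> \<tau> \<in> K) \<and>
     (\<forall>\<sigma>\<in>K. \<forall>\<tau>\<in>K. face_of_simplex (\<sigma> \<inter> \<tau>) \<sigma> \<and> face_of_simplex (\<sigma> \<inter> \<tau>) \<tau>)"

definition polyhedron :: "'a::euclidean_space set set \<Rightarrow> 'a set" where
  "polyhedron K = \<Union>K"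

definition polyhedral_model :: "'a::euclidean_space set set \<Rightarrow> ('p \<Rightarrow> 'a set) \<Rightarrow> bool" where
  "polyhedral_model K Val \<longleftrightarrow> simplicial_complex K \<and>
     (\<forall>p. \<exists>S\<subseteq>{\<sigma>\<in>K. \<sigma> \<noteq> {}}. Val p = \<Union>(cell ` S))"

datatype 'p slcs = Top | Atom 'p | Not "'p slcs" | And "'p slcs" "'p slcs"
  | Box "'p slcs" | Gamma "'p slcs" "'p slcs"

definition path_in :: "'a::euclidean_space set \<Rightarrow> (real \<Rightarrow> 'a) \<Rightarrow> bool" where
  "path_in P \<pi> \<longleftrightarrow> path \<pi> \<and> path_image \<pi> \<subseteq> P"

primrec sem :: "'a::euclidean_space set set \<Rightarrow> ('p \<Rightarrow> 'a set) \<Rightarrow> 'p slcs \<Rightarrow> 'a set" where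
  "sem K Val Top = polyhedron K"
| "sem K Val (Atom p) = polyhedron K \<inter> Val p"
| "sem K Val (Not \<phi>) = polyhedron K - sem K Val \<phi>"
| "sem K Val (And \<phi> \<psi>) = sem K Val \<phi> \<inter> sem K Val \<psi>"
| "sem K Val (Box \<phi>) = (subtopology euclidean (polyhedron K)) interior_of (sem K Val \<phi>)"
| "sem K Val (Gamma \<phi> \<psi>) = {x \<in> polyhedron K. \<exists>\<pi>. path_in (polyhedron K) \<pi> \<and> \<pi> 0 = x \<and>
       \<pi> ` {0<..<1} \<subseteq> sem K Val \<phi> \<and> \<pi> 1 \<in> sem K Val \<psi>}"

definition models :: "'a::euclidean_space set set \<Rightarrow> ('p \<Rightarrow> 'a set) \<Rightarrow> 'a \<Rightarrow> 'p slcs \<Rightarrow> bool" where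
  "models K Val x \<phi> \<longleftrightarrow> x \<in> sem K Val \<phi>"

definition simplicial_path :: "'a::euclidean_space set set \<Rightarrow> (real \<Rightarrow> 'a) \<Rightarrow> bool" where
  "simplicial_path K \<pi> \<longleftrightarrow> path_in (polyhedron K) \<pi> \<and>
     (\<exists>s::nat \<Rightarrow> real. \<exists>k. s 0 = 0 \<and> s k = 1 \<and> (\<forall>i<k. s i < s (Suc i)) \<and>
        (\<forall>i<k. \<exists>\<sigma>\<in>K. \<sigma> \<noteq> {} \<and> \<pi> ` {s i<..<s (Suc i)} \<subseteq> cell \<sigma>))"

definition path_rel :: "('a \<times> 'a) set \<Rightarrow> (real \<Rightarrow> 'a) \<Rightarrow> (real \<Rightarrow> 'a) \<Rightarrow> bool" where
  "path_rel R \<pi>1 \<pi>2 \<longleftrightarrow> (\<forall>t\<in>{0..1}. (\<pi>1 t, \<pi>2 t) \<in> R)"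

definition simplicial_bisimulation ::
  "'a::euclidean_space set set \<Rightarrow> ('p \<Rightarrow> 'a set) \<Rightarrow> ('a \<times> 'a) set \<Rightarrow> bool" where
  "simplicial_bisimulation K Val R \<longleftrightarrow>
     R \<subseteq> polyhedron K \<times> polyhedron K \<and>
     (\<forall>(x, y)\<in>R.
        (\<forall>p. x \<in> Val p \<longleftrightarrow> y \<in> Val p) \<and>
        (\<forall>\<pi>x. simplicial_path K \<pi>x \<and> \<pi>x 0 = x \<longrightarrow>
           (\<exists>\<pi>y. simplicial_path K \<pi>y \<and> \<pi>y 0 = y \<and> path_rel R \<pi>x \<pi>y)) \<and>
        (\<forall>\<pi>y. simplicial_path K \<pi>y \<and> \<pi>y 0 = y \<longrightarrow>
           (\<exists>\<pi>x. simplicial_path K \<pi>x \<and> \<pi>x 0 = x \<and> path_rel R \<pi>x \<pi>y)))"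

end

theory Submission
  imports Defs
begin

text \<open>Induct on the formula, simultaneously for all simplicial bisimulations. The relation
  ``x and y lie in the relative interior of the same simplex'' is itself a simplicial
  bisimulation, so the induction hypothesis makes the extension of every subformula a union of
  cells. For such a set A, a path whose interior stays in A can be traded for a simplicial path
  with the same endpoints and interior in A: near each of its points the path moves inside the
  open star of a single simplex, where straight segments are simplicial, so the times reachable
  from the start by such simplicial paths form an open and closed subset of (0,1). Hence the
  reachability modality only needs simplicial paths, which bisimulations transfer. For the
  interior modality, a point close to x outside A is joined to x by a segment lying in one cell
  except at x; transferring this segment to a bisimilar y yields points outside A arbitrarily
  close to y.\<close>

section \<open>Cells of a simplicial complex\<close>

lemma is_simplex_convex: "is_simplex \<sigma> \<Longrightarrow> convex \<sigma>"
  unfolding is_simplex_def by (auto simp: convex_convex_hull)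

lemma is_simplex_closed: "is_simplex \<sigma> \<Longrightarrow> closed \<sigma>"
  unfolding is_simplex_def by (auto intro: compact_imp_closed finite_imp_compact_convex_hull)

lemma cell_eq_rel_interior:
  assumes "is_simplex \<sigma>"
  shows "cell \<sigma> = rel_interior \<sigma>"
proof
  show "cell \<sigma> \<subseteq> rel_interior \<sigma>"
  proof
    fix x assume "x \<in> cell \<sigma>"
    then obtain V l where "finite V" "\<not> affine_dependent V" "\<sigma> = convex hull V"
      "\<forall>v\<in>V. 0 < l v" "sum l V = 1" "x = (\<Sum>v\<in>V. l v *\<^sub>R v)"
      unfolding cell_def by blast
    then show "x \<in> rel_interior \<sigma>"
      by (auto simp: rel_interior_convex_hull_explicit)
  qed
  obtain V where V: "finite V" "\<not> affine_dependent V" "\<sigma> = convex hull V"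
    using assms unfolding is_simplex_def by blast
  show "rel_interior \<sigma> \<subseteq> cell \<sigma>"
  proof
    fix x assume "x \<in> rel_interior \<sigma>"
    then obtain u where u: "\<forall>v\<in>V. 0 < u v" "sum u V = 1" "x = (\<Sum>v\<in>V. u v *\<^sub>R v)"
      using V by (auto simp: rel_interior_convex_hull_explicit)
    have "u v \<le> 1" if "v \<in> V" for v
      using member_le_sum[of v V u] that u V by (simp add: less_imp_le)
    then show "x \<in> cell \<sigma>"
      unfolding cell_def using V u by blast
  qed
qed

lemma simplicial_complex_is_simplex: "simplicial_complex K \<Longrightarrow> \<sigma> \<in> K \<Longrightarrow> is_simplex \<sigma>"
  unfolding simplicial_complex_def by blast

lemma simplicial_complex_convex: "simplicial_complex K \<Longrightarrow> \<sigma> \<in> K \<Longrightarrow> convex \<sigma>"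
  by (rule is_simplex_convex[OF simplicial_complex_is_simplex])

lemma simplicial_complex_closed: "simplicial_complex K \<Longrightarrow> \<sigma> \<in> K \<Longrightarrow> closed \<sigma>"
  by (rule is_simplex_closed[OF simplicial_complex_is_simplex])

lemma simplicial_complex_cell_eq:
  "simplicial_complex K \<Longrightarrow> \<sigma> \<in> K \<Longrightarrow> cell \<sigma> = rel_interior \<sigma>"
  by (rule cell_eq_rel_interior[OF simplicial_complex_is_simplex])

lemma face_of_simplex_imp_face_of: "face_of_simplex \<tau> \<sigma> \<Longrightarrow> \<tau> face_of \<sigma>"
  unfolding face_of_simplex_def using face_of_convex_hull_affine_independent by metis

lemma rel_interior_mem_imp_subset:
  assumes K: "simplicial_complex K" and "\<sigma> \<in> K" "\<tau> \<in> K" "x \<in> rel_interior \<sigma>" "x \<in> \<tau>"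
  shows "\<sigma> \<subseteq> \<tau>"
proof -
  have "face_of_simplex (\<sigma> \<inter> \<tau>) \<sigma>"
    using K assms(2,3) unfolding simplicial_complex_def by blast
  then have face: "(\<sigma> \<inter> \<tau>) face_of \<sigma>"
    by (rule face_of_simplex_imp_face_of)
  have "x \<in> \<sigma>"
    using assms(4) rel_interior_subset by blast
  then have "\<sigma> \<subseteq> \<sigma> \<inter> \<tau>"
    by (intro subset_of_face_of[OF face]) (use assms in auto)
  then show ?thesis by blast
qed

lemma rel_interior_mem_imp_eq:
  assumes "simplicial_complex K" "\<sigma> \<in> K" "\<tau> \<in> K" "x \<in> rel_interior \<sigma>" "x \<in> rel_interior \<tau>"
  shows "\<sigma> = \<tau>"
  using rel_interior_mem_imp_subset[OF assms(1,2,3,4)] rel_interior_mem_imp_subset[OF assms(1,3,2,5)]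
    assms(4,5) rel_interior_subset by blast

lemma polyhedron_imp_rel_interior:
  assumes K: "simplicial_complex K" and "z \<in> polyhedron K"
  obtains \<tau> where "\<tau> \<in> K" "z \<in> rel_interior \<tau>"
proof -
  obtain \<sigma> where \<sigma>: "\<sigma> \<in> K" "z \<in> \<sigma>"
    using assms(2) unfolding polyhedron_def by blast
  then obtain V where V: "finite V" "\<not> affine_dependent V" "\<sigma> = convex hull V"
    using K unfolding simplicial_complex_def is_simplex_def by blast
  obtain u where u: "\<forall>v\<in>V. 0 \<le> u v" "sum u V = 1" "(\<Sum>v\<in>V. u v *\<^sub>R v) = z"
    using \<sigma> V by (auto simp: convex_hull_finite)
  define W where "W = {v\<in>V. 0 < u v}"
  have "W \<subseteq> V"
    unfolding W_def by auto
  then have W: "\<not> affine_dependent W"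
    using V(2) affine_independent_subset by blast
  have "sum u V = sum u W"
    unfolding W_def by (rule sum.mono_neutral_right) (use V u in auto)
  moreover have "(\<Sum>v\<in>V. u v *\<^sub>R v) = (\<Sum>v\<in>W. u v *\<^sub>R v)"
    unfolding W_def by (rule sum.mono_neutral_right) (use V u in auto)
  moreover have "\<forall>v\<in>W. 0 < u v"
    unfolding W_def by blast
  ultimately have "z \<in> rel_interior (convex hull W)"
    unfolding rel_interior_convex_hull_explicit[OF W] using u(2,3) by auto
  moreover have "face_of_simplex (convex hull W) \<sigma>"
    unfolding face_of_simplex_def using V W \<open>W \<subseteq> V\<close> by blast
  then have "convex hull W \<in> K"
    using K \<sigma>(1) unfolding simplicial_complex_def by blast
  ultimately show thesis
    using that by blast
qed

lemma simplexes_meeting_small_ball_contain_centre: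
  assumes "simplicial_complex K"
  obtains e where "e > 0" "\<And>z \<tau>. dist z x < e \<Longrightarrow> \<tau> \<in> K \<Longrightarrow> z \<in> \<tau> \<Longrightarrow> x \<in> \<tau>"
proof -
  define C where "C = \<Union>{\<tau>\<in>K. x \<notin> \<tau>}"
  have "closed C"
    unfolding C_def using assms
    by (intro closed_Union) (auto intro: simplicial_complex_closed simp: simplicial_complex_def)
  moreover have "x \<notin> C"
    unfolding C_def by blast
  ultimately obtain e where "e > 0" and e: "ball x e \<subseteq> - C"
    by (meson ComplI open_Compl open_contains_ball)
  have "x \<in> \<tau>" if "dist z x < e" "\<tau> \<in> K" "z \<in> \<tau>" for z \<tau>
    using e that unfolding C_def by (auto simp: dist_commute)
  then show thesis
    using that \<open>e > 0\<close> by blast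
qed

lemma path_locally_in_star:
  assumes K: "simplicial_complex K" and \<pi>: "path_in (polyhedron K) \<pi>" and t: "t \<in> {0..1}"
  obtains d where "d > 0"
    "\<And>u. u \<in> {0..1} \<Longrightarrow> dist u t < d \<Longrightarrow> \<exists>\<tau>\<in>K. \<pi> u \<in> rel_interior \<tau> \<and> \<pi> t \<in> \<tau>"
proof -
  obtain e where "e > 0" and e: "\<And>z \<tau>. dist z (\<pi> t) < e \<Longrightarrow> \<tau> \<in> K \<Longrightarrow> z \<in> \<tau> \<Longrightarrow> \<pi> t \<in> \<tau>"
    using simplexes_meeting_small_ball_contain_centre[OF K] by metis
  obtain d where "d > 0" and d: "\<And>u. u \<in> {0..1} \<Longrightarrow> dist u t < d \<Longrightarrow> dist (\<pi> u) (\<pi> t) < e"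
    using \<pi> t \<open>e > 0\<close> unfolding path_in_def path_def continuous_on_iff by metis
  show thesis
  proof (rule that[OF \<open>d > 0\<close>])
    fix u assume u: "u \<in> {0..1}" "dist u t < d"
    then have "\<pi> u \<in> polyhedron K"
      using \<pi> unfolding path_in_def path_image_def by blast
    then obtain \<tau> where "\<tau> \<in> K" "\<pi> u \<in> rel_interior \<tau>"
      using polyhedron_imp_rel_interior[OF K] by blast
    moreover have "\<pi> t \<in> \<tau>"
      using e[OF d[OF u]] calculation rel_interior_subset by blast
    ultimately show "\<exists>\<tau>\<in>K. \<pi> u \<in> rel_interior \<tau> \<and> \<pi> t \<in> \<tau>" by blast
  qed
qed

lemma linepath_in_rel_interior:
  fixes S :: "'a::euclidean_space set"
  assumes "convex S" "a \<in> closure S" "b \<in> rel_interior S" "0 < t" "t \<le> 1"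
  shows "linepath a b t \<in> rel_interior S"
proof -
  have "a - t *\<^sub>R (a - b) \<in> rel_interior S"
    using assms by (intro rel_interior_closure_convex_shrink)
  then show ?thesis
    by (simp add: linepath_def algebra_simps)
qed

definition same_cell :: "'a::euclidean_space set set \<Rightarrow> ('a \<times> 'a) set" where
  "same_cell K = {(a, b). \<exists>\<sigma>\<in>K. a \<in> rel_interior \<sigma> \<and> b \<in> rel_interior \<sigma>}"

definition cellular :: "'a::euclidean_space set set \<Rightarrow> 'a set \<Rightarrow> bool" where
  "cellular K A \<longleftrightarrow> (\<forall>(a, b)\<in>same_cell K. a \<in> A \<longrightarrow> b \<in> A)"

lemma same_cell_refl: "simplicial_complex K \<Longrightarrow> z \<in> polyhedron K \<Longrightarrow> (z, z) \<in> same_cell K"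
  unfolding same_cell_def by (blast elim: polyhedron_imp_rel_interior)

lemma same_cell_sym: "(a, b) \<in> same_cell K \<Longrightarrow> (b, a) \<in> same_cell K"
  unfolding same_cell_def by blast

lemma same_cell_subset_polyhedron: "same_cell K \<subseteq> polyhedron K \<times> polyhedron K"
  unfolding same_cell_def polyhedron_def using rel_interior_subset by blast

lemma polyhedral_model_cellular:
  assumes PM: "polyhedral_model K Val"
  shows "cellular K (Val p)"
  unfolding cellular_def
proof (clarify)
  fix a b assume ab: "(a, b) \<in> same_cell K" and a: "a \<in> Val p"
  have K: "simplicial_complex K"
    using PM unfolding polyhedral_model_def by blast
  obtain S where "S \<subseteq> {\<sigma>\<in>K. \<sigma> \<noteq> {}}" "Val p = \<Union>(cell ` S)"
    using PM unfolding polyhedral_model_def by blast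
  then have S: "S \<subseteq> K" "Val p = \<Union>(cell ` S)"
    by auto
  then obtain \<tau> where \<tau>: "\<tau> \<in> S" "a \<in> cell \<tau>"
    using a by blast
  obtain \<sigma> where \<sigma>: "\<sigma> \<in> K" "a \<in> rel_interior \<sigma>" "b \<in> rel_interior \<sigma>"
    using ab unfolding same_cell_def by blast
  have "\<tau> \<in> K"
    using \<tau>(1) S(1) by blast
  then have "\<tau> = \<sigma>"
    using rel_interior_mem_imp_eq[OF K \<open>\<tau> \<in> K\<close> \<sigma>(1) _ \<sigma>(2)] \<tau>(2) simplicial_complex_cell_eq[OF K] by simp
  then show "b \<in> Val p"
    using S(2) \<tau>(1) \<sigma>(3) simplicial_complex_cell_eq[OF K \<sigma>(1)] by auto
qed

section \<open>Simplicial paths\<close>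

lemma strict_mono_prefix_le:
  fixes s :: "nat \<Rightarrow> 'a::order"
  assumes "\<forall>i<k. s i < s (Suc i)" "i \<le> j" "j \<le> k"
  shows "s i \<le> s j"
  using lift_Suc_mono_le_ivl[of "{..<k}" s i j] assms by fastforce

lemma simplicial_path_linepath:
  assumes K: "simplicial_complex K" and \<tau>: "\<tau> \<in> K" "a \<in> \<tau>" "b \<in> \<tau>"
    and open_segment: "\<And>t. t \<in> {0<..<1} \<Longrightarrow> linepath a b t \<in> rel_interior \<tau>"
  shows "simplicial_path K (linepath a b)"
proof -
  have "convex \<tau>"
    by (rule simplicial_complex_convex[OF K \<tau>(1)])
  then have "path_image (linepath a b) \<subseteq> \<tau>"
    using \<tau>(2,3) by (simp add: closed_segment_subset)
  then have "path_in (polyhedron K) (linepath a b)"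
    using \<tau>(1) unfolding path_in_def polyhedron_def by auto
  moreover have "linepath a b ` {0<..<1} \<subseteq> cell \<tau>"
    using open_segment simplicial_complex_cell_eq[OF K \<tau>(1)] by auto
  ultimately show ?thesis
    unfolding simplicial_path_def using \<tau>
    by (intro conjI exI[of _ "\<lambda>i. if i = 0 then 0 else 1"] exI[of _ 1]) auto
qed

lemma joinpaths_image_first_half:
  "b \<le> 1 \<Longrightarrow> (\<rho>1 +++ \<rho>2) ` {a/2<..<b/2} \<subseteq> \<rho>1 ` {a<..<b}"
  by (auto simp: joinpaths_def intro!: image_eqI[where x = "2 * _"])

lemma joinpaths_image_second_half:
  "0 \<le> a \<Longrightarrow> (\<rho>1 +++ \<rho>2) ` {(a+1)/2<..<(b+1)/2} \<subseteq> \<rho>2 ` {a<..<b}"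
  by (auto simp: joinpaths_def intro!: image_eqI[where x = "2 * _ - 1"])

lemma simplicial_path_join:
  assumes \<rho>1: "simplicial_path K \<rho>1" and \<rho>2: "simplicial_path K \<rho>2" and "\<rho>1 1 = \<rho>2 0"
  shows "simplicial_path K (\<rho>1 +++ \<rho>2)"
proof -
  obtain s1 k1 where S1: "s1 0 = 0" "s1 k1 = 1" "\<forall>i<k1. s1 i < s1 (Suc i)"
      "\<forall>i<k1. \<exists>\<sigma>\<in>K. \<sigma> \<noteq> {} \<and> \<rho>1 ` {s1 i<..<s1 (Suc i)} \<subseteq> cell \<sigma>"
    using \<rho>1 unfolding simplicial_path_def by blast
  obtain s2 k2 where S2: "s2 0 = 0" "s2 k2 = 1" "\<forall>i<k2. s2 i < s2 (Suc i)"
      "\<forall>i<k2. \<exists>\<sigma>\<in>K. \<sigma> \<noteq> {} \<and> \<rho>2 ` {s2 i<..<s2 (Suc i)} \<subseteq> cell \<sigma>"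
    using \<rho>2 unfolding simplicial_path_def by blast
  have "path_in (polyhedron K) (\<rho>1 +++ \<rho>2)"
    using \<rho>1 \<rho>2 assms(3) path_image_join_subset[of \<rho>1 \<rho>2]
    unfolding simplicial_path_def path_in_def by (auto simp: pathfinish_def pathstart_def)
  define s where "s i = (if i \<le> k1 then s1 i / 2 else (s2 (i - k1) + 1) / 2)" for i
  have s_high: "s (k1 + j) = (s2 j + 1) / 2" for j
    using S1(2) S2(1) unfolding s_def by auto
  have piece: "s i < s (Suc i) \<and> (\<exists>\<sigma>\<in>K. \<sigma> \<noteq> {} \<and> (\<rho>1 +++ \<rho>2) ` {s i<..<s (Suc i)} \<subseteq> cell \<sigma>)"
    if "i < k1 + k2" for i
  proof (cases "i < k1")
    case True
    obtain \<sigma> where \<sigma>: "\<sigma> \<in> K" "\<sigma> \<noteq> {}" "\<rho>1 ` {s1 i<..<s1 (Suc i)} \<subseteq> cell \<sigma>"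
      using S1(4) True by blast
    have s: "s i = s1 i / 2" "s (Suc i) = s1 (Suc i) / 2"
      using True unfolding s_def by auto
    have "s1 (Suc i) \<le> 1"
      using strict_mono_prefix_le[OF S1(3), of "Suc i" k1] True S1(2) by simp
    then have "(\<rho>1 +++ \<rho>2) ` {s i<..<s (Suc i)} \<subseteq> \<rho>1 ` {s1 i<..<s1 (Suc i)}"
      unfolding s by (rule joinpaths_image_first_half)
    then show ?thesis
      using \<sigma> S1(3) True unfolding s by (intro conjI bexI[of _ \<sigma>]) auto
  next
    case False
    define j where "j = i - k1"
    have j: "i = k1 + j" "Suc i = k1 + Suc j" "j < k2"
      using False that unfolding j_def by auto
    obtain \<sigma> where \<sigma>: "\<sigma> \<in> K" "\<sigma> \<noteq> {}" "\<rho>2 ` {s2 j<..<s2 (Suc j)} \<subseteq> cell \<sigma>"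
      using S2(4) j(3) by blast
    have s: "s i = (s2 j + 1) / 2" "s (Suc i) = (s2 (Suc j) + 1) / 2"
      using s_high[of j] s_high[of "Suc j"] unfolding j(1,2) by simp_all
    have "0 \<le> s2 j"
      using strict_mono_prefix_le[OF S2(3), of 0 j] j(3) S2(1) by simp
    then have "(\<rho>1 +++ \<rho>2) ` {s i<..<s (Suc i)} \<subseteq> \<rho>2 ` {s2 j<..<s2 (Suc j)}"
      unfolding s by (rule joinpaths_image_second_half)
    then show ?thesis
      using \<sigma> S2(3) j(3) unfolding s by (intro conjI bexI[of _ \<sigma>]) auto
  qed
  have "s 0 = 0" "s (k1 + k2) = 1"
    using S1(1) s_high[of k2] S2(2) unfolding s_def by auto
  then show ?thesis
    unfolding simplicial_path_def using \<open>path_in (polyhedron K) (\<rho>1 +++ \<rho>2)\<close> piece by blast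
qed

lemma joinpaths_image_greaterThanLessThan:
  "(\<rho>1 +++ \<rho>2) ` {0<..<1} \<subseteq> \<rho>1 ` {0<..<1} \<union> {\<rho>1 1} \<union> \<rho>2 ` {0<..<1}"
proof
  fix y assume "y \<in> (\<rho>1 +++ \<rho>2) ` {0<..<1}"
  then obtain t where t: "0 < t" "t < 1" "y = (\<rho>1 +++ \<rho>2) t" by auto
  consider "t < 1/2" | "t = 1/2" | "t > 1/2" by linarith
  then show "y \<in> \<rho>1 ` {0<..<1} \<union> {\<rho>1 1} \<union> \<rho>2 ` {0<..<1}"
  proof cases
    case 1
    then have "y = \<rho>1 (2 * t)" "2 * t \<in> {0<..<1}"
      using t by (auto simp: joinpaths_def)
    then show ?thesis by blast
  next
    case 2
    show ?thesis
      using t unfolding 2 by (simp add: joinpaths_def)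
  next
    case 3
    then have "y = \<rho>2 (2 * t - 1)" "2 * t - 1 \<in> {0<..<1}"
      using t by (auto simp: joinpaths_def)
    then show ?thesis by blast
  qed
qed

text \<open>The subdivision of the simplicial path serves for the new path as well: on each of its
  intervals the cell is forced, since distinct simplexes have disjoint relative interiors.\<close>

lemma simplicial_path_if_same_cell:
  assumes K: "simplicial_complex K" and \<pi>: "simplicial_path K \<pi>"
    and \<pi>': "path_in (polyhedron K) \<pi>'"
    and same: "\<And>t. t \<in> {0<..<1} \<Longrightarrow> (\<pi> t, \<pi>' t) \<in> same_cell K"
  shows "simplicial_path K \<pi>'"
proof -
  obtain s k where S: "s 0 = 0" "s k = 1" "\<forall>i<k. s i < s (Suc i)"
      and cells: "\<forall>i<k. \<exists>\<sigma>\<in>K. \<sigma> \<noteq> {} \<and> \<pi> ` {s i<..<s (Suc i)} \<subseteq> cell \<sigma>"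
    using \<pi> unfolding simplicial_path_def by blast
  have "\<pi>' ` {s i<..<s (Suc i)} \<subseteq> cell \<sigma>"
    if i: "i < k" and \<sigma>: "\<sigma> \<in> K" "\<pi> ` {s i<..<s (Suc i)} \<subseteq> cell \<sigma>" for i \<sigma>
  proof (rule image_subsetI)
    fix t assume t: "t \<in> {s i<..<s (Suc i)}"
    have "s 0 \<le> s i" "s (Suc i) \<le> s k"
      using strict_mono_prefix_le[OF S(3), of 0 i] strict_mono_prefix_le[OF S(3), of "Suc i" k] i
      by simp_all
    then have "t \<in> {0<..<1}"
      using t S(1,2) by simp
    then obtain \<tau> where \<tau>: "\<tau> \<in> K" "\<pi> t \<in> rel_interior \<tau>" "\<pi>' t \<in> rel_interior \<tau>"
      using same unfolding same_cell_def by blast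
    have "\<pi> t \<in> rel_interior \<sigma>"
      using \<sigma>(2) t simplicial_complex_cell_eq[OF K \<sigma>(1)] by auto
    then have "\<tau> = \<sigma>"
      using rel_interior_mem_imp_eq[OF K \<tau>(1) \<sigma>(1) \<tau>(2)] by simp
    then show "\<pi>' t \<in> cell \<sigma>"
      using \<tau>(3) simplicial_complex_cell_eq[OF K \<sigma>(1)] by simp
  qed
  then have "\<forall>i<k. \<exists>\<sigma>\<in>K. \<sigma> \<noteq> {} \<and> \<pi>' ` {s i<..<s (Suc i)} \<subseteq> cell \<sigma>"
    using cells by meson
  then show ?thesis
    unfolding simplicial_path_def using S(1-3) \<pi>' by blast
qed

lemma simplicial_path_initial_cell:
  assumes K: "simplicial_complex K" and \<pi>: "simplicial_path K \<pi>"
  obtains c \<sigma> where "0 < c" "c \<le> 1" "\<sigma> \<in> K" "\<pi> 0 \<in> \<sigma>"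
    "\<And>t. t \<in> {0<..<c} \<Longrightarrow> \<pi> t \<in> rel_interior \<sigma>"
proof -
  obtain s k where S: "s 0 = 0" "s k = 1" "\<forall>i<k. s i < s (Suc i)"
      "\<forall>i<k. \<exists>\<sigma>\<in>K. \<sigma> \<noteq> {} \<and> \<pi> ` {s i<..<s (Suc i)} \<subseteq> cell \<sigma>"
      and P: "path_in (polyhedron K) \<pi>"
    using \<pi> unfolding simplicial_path_def by blast
  have "0 < k"
    using S(1,2) by (cases k) auto
  then obtain \<sigma> where \<sigma>: "\<sigma> \<in> K" "\<pi> ` {s 0<..<s (Suc 0)} \<subseteq> cell \<sigma>"
    using S(4) by blast
  have c: "0 < s 1" "s 1 \<le> 1"
    using S(1,2,3) strict_mono_prefix_le[OF S(3), of 1 k] \<open>0 < k\<close> by auto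
  have ri: "\<pi> t \<in> rel_interior \<sigma>" if "t \<in> {0<..<s 1}" for t
    using \<sigma>(2) that S(1) simplicial_complex_cell_eq[OF K \<sigma>(1)] by auto
  have "\<pi> ` closure {0<..<s 1} \<subseteq> \<sigma>"
  proof (rule image_closure_subset)
    show "continuous_on (closure {0<..<s 1}) \<pi>"
      using P c unfolding path_in_def path_def by (auto intro: continuous_on_subset)
    show "closed \<sigma>"
      by (rule simplicial_complex_closed[OF K \<sigma>(1)])
    show "\<pi> ` {0<..<s 1} \<subseteq> \<sigma>"
      using ri rel_interior_subset by blast
  qed
  then have "\<pi> 0 \<in> \<sigma>"
    using c by auto
  then show thesis
    using that c \<sigma>(1) ri by blast
qed

section \<open>Replacing paths by simplicial paths\<close>

definition simplicial_reach :: "'a::euclidean_space set set \<Rightarrow> 'a set \<Rightarrow> 'a \<Rightarrow> 'a \<Rightarrow> bool" where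
  "simplicial_reach K A p q \<longleftrightarrow>
     (\<exists>\<rho>. simplicial_path K \<rho> \<and> \<rho> 0 = p \<and> \<rho> 1 = q \<and> \<rho> ` {0<..<1} \<subseteq> A)"

lemma simplicial_reach_trans:
  assumes "simplicial_reach K A p q" "q \<in> A" "simplicial_reach K A q r"
  shows "simplicial_reach K A p r"
proof -
  obtain \<rho>1 \<rho>2 where
    \<rho>1: "simplicial_path K \<rho>1" "\<rho>1 0 = p" "\<rho>1 1 = q" "\<rho>1 ` {0<..<1} \<subseteq> A" and
    \<rho>2: "simplicial_path K \<rho>2" "\<rho>2 0 = q" "\<rho>2 1 = r" "\<rho>2 ` {0<..<1} \<subseteq> A"
    using assms(1,3) unfolding simplicial_reach_def by blast
  have "\<rho>1 ` {0<..<1} \<union> {\<rho>1 1} \<union> \<rho>2 ` {0<..<1} \<subseteq> A"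
    using \<rho>1(3,4) \<rho>2(4) assms(2) by simp
  then have "(\<rho>1 +++ \<rho>2) ` {0<..<1} \<subseteq> A"
    by (rule subset_trans[OF joinpaths_image_greaterThanLessThan])
  moreover have "simplicial_path K (\<rho>1 +++ \<rho>2)"
    using simplicial_path_join[OF \<rho>1(1) \<rho>2(1)] \<rho>1(3) \<rho>2(2) by simp
  ultimately show ?thesis
    unfolding simplicial_reach_def using \<rho>1(2) \<rho>2(3)
    by (intro exI[of _ "\<rho>1 +++ \<rho>2"]) (simp add: joinpaths_def)
qed

lemma simplicial_reach_segment:
  assumes K: "simplicial_complex K" and A: "cellular K A"
    and \<tau>: "\<tau> \<in> K" "p \<in> \<tau>" "q \<in> rel_interior \<tau>" "q \<in> A"
  shows "simplicial_reach K A p q" "simplicial_reach K A q p"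
proof -
  have "convex \<tau>"
    by (rule simplicial_complex_convex[OF K \<tau>(1)])
  moreover have "p \<in> closure \<tau>"
    using \<tau>(2) closure_subset by blast
  ultimately have pq: "linepath p q t \<in> rel_interior \<tau>" if "0 < t" "t \<le> 1" for t
    using linepath_in_rel_interior \<tau>(3) that by blast
  have qp: "linepath q p t \<in> rel_interior \<tau>" if "0 \<le> t" "t < 1" for t
    using pq[of "1 - t"] that by (simp add: linepath_def algebra_simps)
  have in_A: "z \<in> A" if "z \<in> rel_interior \<tau>" for z
    using A \<tau>(1,3,4) that unfolding cellular_def same_cell_def by blast
  have "q \<in> \<tau>"
    using \<tau>(3) rel_interior_subset by blast
  have "simplicial_path K (linepath p q)" "simplicial_path K (linepath q p)"
    by (rule simplicial_path_linepath[OF K \<tau>(1)]; use pq qp \<tau>(2) \<open>q \<in> \<tau>\<close> in simp)+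
  moreover have "linepath p q ` {0<..<1} \<subseteq> A" "linepath q p ` {0<..<1} \<subseteq> A"
    using pq qp in_A by auto
  ultimately show "simplicial_reach K A p q" "simplicial_reach K A q p"
    unfolding simplicial_reach_def by (metis linepath_0' linepath_1')+
qed

lemma path_locally_simplicial_reach:
  assumes K: "simplicial_complex K" and A: "cellular K A"
    and \<pi>: "path_in (polyhedron K) \<pi>" "\<pi> ` {0<..<1} \<subseteq> A" and t: "t \<in> {0..1}"
  obtains d where "d > 0" "\<And>u. u \<in> {0<..<1} \<Longrightarrow> dist u t < d \<Longrightarrow>
      simplicial_reach K A (\<pi> t) (\<pi> u) \<and> simplicial_reach K A (\<pi> u) (\<pi> t)"
proof -
  obtain d where "d > 0"
    and d: "\<And>u. u \<in> {0..1} \<Longrightarrow> dist u t < d \<Longrightarrow> \<exists>\<tau>\<in>K. \<pi> u \<in> rel_interior \<tau> \<and> \<pi> t \<in> \<tau>"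
    using path_locally_in_star[OF K \<pi>(1) t] by blast
  have "simplicial_reach K A (\<pi> t) (\<pi> u) \<and> simplicial_reach K A (\<pi> u) (\<pi> t)"
    if u: "u \<in> {0<..<1}" "dist u t < d" for u
  proof -
    have "u \<in> {0..1}"
      using u(1) by simp
    then obtain \<tau> where \<tau>: "\<tau> \<in> K" "\<pi> u \<in> rel_interior \<tau>" "\<pi> t \<in> \<tau>"
      using d u(2) by blast
    have "\<pi> u \<in> A"
      using \<pi>(2) u(1) by blast
    then show ?thesis
      using simplicial_reach_segment[OF K A \<tau>(1,3,2)] by blast
  qed
  then show thesis
    using that \<open>d > 0\<close> by blast
qed

lemma path_imp_simplicial_reach:
  assumes K: "simplicial_complex K" and A: "cellular K A"
    and \<pi>: "path_in (polyhedron K) \<pi>" "\<pi> ` {0<..<1} \<subseteq> A"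
  shows "simplicial_reach K A (\<pi> 0) (\<pi> 1)"
proof -
  note near = path_locally_simplicial_reach[OF K A \<pi>]
  define f where "f u \<longleftrightarrow> simplicial_reach K A (\<pi> 0) (\<pi> u)" for u
  obtain d0 where "d0 > 0" and d0: "\<And>u. u \<in> {0<..<1} \<Longrightarrow> dist u 0 < d0 \<Longrightarrow>
      simplicial_reach K A (\<pi> 0) (\<pi> u) \<and> simplicial_reach K A (\<pi> u) (\<pi> 0)"
    by (rule near[of 0]) auto
  obtain d1 where "d1 > 0" and d1: "\<And>u. u \<in> {0<..<1} \<Longrightarrow> dist u 1 < d1 \<Longrightarrow>
      simplicial_reach K A (\<pi> 1) (\<pi> u) \<and> simplicial_reach K A (\<pi> u) (\<pi> 1)"
    by (rule near[of 1]) auto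
  have locally_const: "\<forall>t\<in>{0<..<1}. eventually (\<lambda>u. f t = f u) (at t within {0<..<1})"
  proof
    fix t :: real assume t: "t \<in> {0<..<1}"
    obtain d where "d > 0" and d: "\<And>u. u \<in> {0<..<1} \<Longrightarrow> dist u t < d \<Longrightarrow>
        simplicial_reach K A (\<pi> t) (\<pi> u) \<and> simplicial_reach K A (\<pi> u) (\<pi> t)"
      by (rule near[of t]) (use t in auto)
    have "f t = f u" if u: "u \<in> {0<..<1}" "dist u t < d" for u
    proof -
      have "\<pi> t \<in> A" "\<pi> u \<in> A"
        using \<pi>(2) t u(1) by blast+
      moreover have "simplicial_reach K A (\<pi> t) (\<pi> u)" "simplicial_reach K A (\<pi> u) (\<pi> t)"
        using d u by blast+
      ultimately show ?thesis
        using simplicial_reach_trans[of K A "\<pi> 0" "\<pi> t" "\<pi> u"]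
          simplicial_reach_trans[of K A "\<pi> 0" "\<pi> u" "\<pi> t"]
        unfolding f_def by blast
    qed
    then show "eventually (\<lambda>u. f t = f u) (at t within {0<..<1})"
      unfolding eventually_at using \<open>d > 0\<close> by blast
  qed
  have f_const: "f u = f v" if "u \<in> {0<..<1}" "v \<in> {0<..<1}" for u v
    by (rule connected_local_const[OF _ that locally_const]) simp
  define u0 where "u0 = min (d0 / 2) (1 / 2)"
  define u1 where "u1 = max (1 - d1 / 2) (1 / 2)"
  have u: "u0 \<in> {0<..<1}" "dist u0 0 < d0" "u1 \<in> {0<..<1}" "dist u1 1 < d1"
    using \<open>d0 > 0\<close> \<open>d1 > 0\<close> unfolding u0_def u1_def by (auto simp: dist_real_def)
  then have "f u1"
    using d0 f_const[of u0 u1] unfolding f_def by blast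
  moreover have "\<pi> u1 \<in> A"
    using \<pi>(2) u(3) by blast
  moreover have "simplicial_reach K A (\<pi> u1) (\<pi> 1)"
    using d1 u(3,4) by blast
  ultimately show ?thesis
    using simplicial_reach_trans unfolding f_def by blast
qed

section \<open>The same-cell relation is a simplicial bisimulation\<close>

lemma path_linepath_splice:
  assumes "path \<pi>" "0 < h"
  shows "path (\<lambda>t. if t \<le> h then linepath b (\<pi> h) (t / h) else \<pi> t)"
  unfolding path_def
proof (rule continuous_on_cases_le[where h = "\<lambda>t. t", simplified])
  show "continuous_on {t \<in> {0..1}. t \<le> h} (\<lambda>t. linepath b (\<pi> h) (t / h))"
    unfolding linepath_def using assms(2) by (intro continuous_intros) auto
  show "continuous_on {t \<in> {0..1}. h \<le> t} \<pi>"
    using assms(1) unfolding path_def by (rule continuous_on_subset) auto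
  show "\<And>t. t = h \<Longrightarrow> linepath b (\<pi> h) (t / h) = \<pi> t"
    using assms(2) by (simp add: linepath_1')
qed

text \<open>Start along the straight segment from b to a point of the first cell of the path, then
  follow the path: the simplex containing that cell also contains a, hence b.\<close>

lemma same_cell_lift_simplicial_path:
  assumes K: "simplicial_complex K" and ab: "(a, b) \<in> same_cell K"
    and \<pi>: "simplicial_path K \<pi>" "\<pi> 0 = a"
  obtains \<pi>' where "simplicial_path K \<pi>'" "\<pi>' 0 = b"
    "\<And>t. t \<in> {0..1} \<Longrightarrow> (\<pi> t, \<pi>' t) \<in> same_cell K"
proof -
  obtain \<sigma> where \<sigma>: "\<sigma> \<in> K" "a \<in> rel_interior \<sigma>" "b \<in> rel_interior \<sigma>"
    using ab unfolding same_cell_def by blast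
  obtain c \<tau> where c: "0 < c" "c \<le> 1" "\<tau> \<in> K" "a \<in> \<tau>"
    and first_cell: "\<And>t. t \<in> {0<..<c} \<Longrightarrow> \<pi> t \<in> rel_interior \<tau>"
    using simplicial_path_initial_cell[OF K \<pi>(1)] \<pi>(2) by metis
  have "b \<in> \<tau>"
    using rel_interior_mem_imp_subset[OF K \<sigma>(1) c(3) \<sigma>(2) c(4)] \<sigma>(3) rel_interior_subset by blast
  define h where "h = c / 2"
  have h: "0 < h" "h < c"
    using c unfolding h_def by auto
  define \<pi>' where "\<pi>' t = (if t \<le> h then linepath b (\<pi> h) (t / h) else \<pi> t)" for t
  have segment: "\<pi>' t \<in> rel_interior \<tau>" if "0 < t" "t \<le> h" for t
    unfolding \<pi>'_def using that h first_cell[of h] \<open>b \<in> \<tau>\<close> closure_subset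
      simplicial_complex_convex[OF K c(3)]
    by (auto intro!: linepath_in_rel_interior)
  have same: "(\<pi> t, \<pi>' t) \<in> same_cell K" if t: "t \<in> {0..1}" for t
  proof -
    consider "t = 0" | "0 < t" "t \<le> h" | "h < t"
      using t by force
    then show ?thesis
    proof cases
      case 1
      then show ?thesis
        using ab \<pi>(2) h by (simp add: \<pi>'_def linepath_0')
    next
      case 2
      then show ?thesis
        using segment first_cell[of t] h c(3) unfolding same_cell_def by auto
    next
      case 3
      have "\<pi> t \<in> polyhedron K"
        using \<pi>(1) t unfolding simplicial_path_def path_in_def path_image_def by blast
      then show ?thesis
        using same_cell_refl[OF K] 3 by (simp add: \<pi>'_def)
    qed
  qed
  have "path \<pi>"
    using \<pi>(1) unfolding simplicial_path_def path_in_def by blast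
  then have "path \<pi>'"
    unfolding \<pi>'_def using h(1) by (rule path_linepath_splice)
  moreover have "path_image \<pi>' \<subseteq> polyhedron K"
    using same same_cell_subset_polyhedron unfolding path_image_def by blast
  ultimately have "simplicial_path K \<pi>'"
    using simplicial_path_if_same_cell[OF K \<pi>(1)] same unfolding path_in_def by auto
  moreover have "\<pi>' 0 = b"
    using h by (simp add: \<pi>'_def linepath_0')
  ultimately show thesis
    using that same by blast
qed

lemma same_cell_simplicial_bisimulation:
  assumes PM: "polyhedral_model K Val"
  shows "simplicial_bisimulation K Val (same_cell K)"
proof -
  have K: "simplicial_complex K"
    using PM unfolding polyhedral_model_def by blast
  have "(x \<in> Val p \<longleftrightarrow> y \<in> Val p)" if "(x, y) \<in> same_cell K" for x y p
    using polyhedral_model_cellular[OF PM, of p] that same_cell_sym unfolding cellular_def by blast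
  moreover have "\<exists>\<pi>'. simplicial_path K \<pi>' \<and> \<pi>' 0 = y \<and> path_rel (same_cell K) \<pi> \<pi>'"
    if "(x, y) \<in> same_cell K" "simplicial_path K \<pi>" "\<pi> 0 = x" for x y \<pi>
    using same_cell_lift_simplicial_path[OF K that] unfolding path_rel_def by metis
  moreover have "\<exists>\<pi>'. simplicial_path K \<pi>' \<and> \<pi>' 0 = x \<and> path_rel (same_cell K) \<pi>' \<pi>"
    if "(x, y) \<in> same_cell K" "simplicial_path K \<pi>" "\<pi> 0 = y" for x y \<pi>
    using same_cell_lift_simplicial_path[OF K same_cell_sym[OF that(1)] that(2,3)] same_cell_sym
    unfolding path_rel_def by metis
  ultimately show ?thesis
    unfolding simplicial_bisimulation_def using same_cell_subset_polyhedron by blast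
qed

section \<open>Transfer of the modalities along a bisimulation\<close>

lemma simplicial_bisimulation_converse:
  "simplicial_bisimulation K Val R \<Longrightarrow> simplicial_bisimulation K Val (R\<inverse>)"
  unfolding simplicial_bisimulation_def path_rel_def by fast

lemma simplicial_bisimulation_lift_path:
  assumes "simplicial_bisimulation K Val R" "(x, y) \<in> R" "simplicial_path K \<pi>" "\<pi> 0 = x"
  obtains \<pi>' where "simplicial_path K \<pi>'" "\<pi>' 0 = y" "\<And>t. t \<in> {0..1} \<Longrightarrow> (\<pi> t, \<pi>' t) \<in> R"
  using assms unfolding simplicial_bisimulation_def path_rel_def by fast

lemma mem_interior_of_top_of_set_iff:
  "y \<in> (top_of_set P) interior_of A \<longleftrightarrow> y \<in> P \<and> (\<exists>e>0. \<forall>z\<in>P. dist z y < e \<longrightarrow> z \<in> A)"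
proof
  assume "y \<in> (top_of_set P) interior_of A"
  then obtain T where "openin (top_of_set P) T" "y \<in> T" "T \<subseteq> A"
    unfolding interior_of_def by blast
  then show "y \<in> P \<and> (\<exists>e>0. \<forall>z\<in>P. dist z y < e \<longrightarrow> z \<in> A)"
    unfolding openin_euclidean_subtopology_iff by blast
next
  assume "y \<in> P \<and> (\<exists>e>0. \<forall>z\<in>P. dist z y < e \<longrightarrow> z \<in> A)"
  then obtain e where "y \<in> P" "e > 0" "\<forall>z\<in>P. dist z y < e \<longrightarrow> z \<in> A" by blast
  then have "openin (top_of_set P) (P \<inter> ball y e)" "y \<in> P \<inter> ball y e" "P \<inter> ball y e \<subseteq> A"
    by (auto intro: openin_open_Int simp: dist_commute)
  then show "y \<in> (top_of_set P) interior_of A"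
    unfolding interior_of_def by blast
qed

lemma path_approaches_start:
  assumes "path \<pi>" "e > 0"
  obtains t where "0 < t" "t \<le> 1" "dist (\<pi> t) (\<pi> 0) < e"
proof -
  obtain d where "d > 0" and d: "\<And>t. t \<in> {0..1} \<Longrightarrow> dist t 0 < d \<Longrightarrow> dist (\<pi> t) (\<pi> 0) < e"
    using assms unfolding path_def continuous_on_iff by (metis atLeastAtMost_iff order_refl zero_le_one)
  define t where "t = min (d / 2) 1"
  have "0 < t" "t \<le> 1" "dist t 0 < d"
    using \<open>d > 0\<close> unfolding t_def by (auto simp: dist_real_def)
  then show thesis
    using that d by simp
qed

lemma simplicial_bisimulation_interior_of:
  assumes K: "simplicial_complex K" and R: "simplicial_bisimulation K Val R" "(x, y) \<in> R"
    and A: "cellular K A" and inv: "\<And>u v. (u, v) \<in> R \<Longrightarrow> u \<in> A \<longleftrightarrow> v \<in> A"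
    and y: "y \<in> (top_of_set (polyhedron K)) interior_of A"
  shows "x \<in> (top_of_set (polyhedron K)) interior_of A"
proof -
  obtain e where "e > 0" and e: "\<And>z. z \<in> polyhedron K \<Longrightarrow> dist z y < e \<Longrightarrow> z \<in> A"
    using y unfolding mem_interior_of_top_of_set_iff by blast
  obtain \<epsilon> where "\<epsilon> > 0" and \<epsilon>: "\<And>z \<tau>. dist z x < \<epsilon> \<Longrightarrow> \<tau> \<in> K \<Longrightarrow> z \<in> \<tau> \<Longrightarrow> x \<in> \<tau>"
    using simplexes_meeting_small_ball_contain_centre[OF K] by blast
  have "z \<in> A" if z: "z \<in> polyhedron K" "dist z x < \<epsilon>" for z
  proof (rule ccontr)
    assume "z \<notin> A"
    obtain \<tau> where \<tau>: "\<tau> \<in> K" "z \<in> rel_interior \<tau>"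
      using polyhedron_imp_rel_interior[OF K z(1)] by blast
    have "z \<in> \<tau>"
      using \<tau>(2) rel_interior_subset by blast
    then have "x \<in> \<tau>"
      using \<epsilon> z(2) \<tau>(1) by blast
    have segment: "linepath x z t \<in> rel_interior \<tau>" if "0 < t" "t \<le> 1" for t
      using linepath_in_rel_interior[OF simplicial_complex_convex[OF K \<tau>(1)] _ \<tau>(2) that]
        \<open>x \<in> \<tau>\<close> closure_subset by blast
    have off_A: "linepath x z t \<notin> A" if "0 < t" "t \<le> 1" for t
      using A \<tau> \<open>z \<notin> A\<close> segment[OF that] unfolding cellular_def same_cell_def by blast
    have "simplicial_path K (linepath x z)"
      by (rule simplicial_path_linepath[OF K \<tau>(1) \<open>x \<in> \<tau>\<close> \<open>z \<in> \<tau>\<close>]) (simp add: segment)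
    then obtain \<pi> where \<pi>: "simplicial_path K \<pi>" "\<pi> 0 = y"
      and rel: "\<And>t. t \<in> {0..1} \<Longrightarrow> (linepath x z t, \<pi> t) \<in> R"
      using simplicial_bisimulation_lift_path[OF R] by (metis linepath_0')
    have "path \<pi>" "path_image \<pi> \<subseteq> polyhedron K"
      using \<pi>(1) unfolding simplicial_path_def path_in_def by blast+
    obtain t where t: "0 < t" "t \<le> 1" "dist (\<pi> t) y < e"
      using path_approaches_start[OF \<open>path \<pi>\<close> \<open>e > 0\<close>] \<pi>(2) by metis
    then have "\<pi> t \<in> polyhedron K"
      using \<open>path_image \<pi> \<subseteq> polyhedron K\<close> unfolding path_image_def by auto
    then have "\<pi> t \<in> A"
      using e t(3) by simp
    moreover have "(linepath x z t, \<pi> t) \<in> R"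
      using rel t by simp
    ultimately show False
      using inv off_A[OF t(1,2)] by blast
  qed
  moreover have "x \<in> polyhedron K"
    using R unfolding simplicial_bisimulation_def by blast
  ultimately show ?thesis
    unfolding mem_interior_of_top_of_set_iff using \<open>\<epsilon> > 0\<close> by blast
qed

lemma simplicial_bisimulation_reach_path:
  assumes K: "simplicial_complex K" and R: "simplicial_bisimulation K Val R" "(x, y) \<in> R"
    and A: "cellular K A" and invA: "\<And>u v. (u, v) \<in> R \<Longrightarrow> u \<in> A \<longleftrightarrow> v \<in> A"
    and invB: "\<And>u v. (u, v) \<in> R \<Longrightarrow> u \<in> B \<longleftrightarrow> v \<in> B"
    and \<pi>: "path_in (polyhedron K) \<pi>" "\<pi> 0 = x" "\<pi> ` {0<..<1} \<subseteq> A" "\<pi> 1 \<in> B"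
  obtains \<pi>' where "path_in (polyhedron K) \<pi>'" "\<pi>' 0 = y" "\<pi>' ` {0<..<1} \<subseteq> A" "\<pi>' 1 \<in> B"
proof -
  obtain \<rho> where \<rho>: "simplicial_path K \<rho>" "\<rho> 0 = x" "\<rho> 1 = \<pi> 1" "\<rho> ` {0<..<1} \<subseteq> A"
    using path_imp_simplicial_reach[OF K A \<pi>(1,3)] \<pi>(2) unfolding simplicial_reach_def by blast
  obtain \<rho>' where \<rho>': "simplicial_path K \<rho>'" "\<rho>' 0 = y" "\<And>t. t \<in> {0..1} \<Longrightarrow> (\<rho> t, \<rho>' t) \<in> R"
    using simplicial_bisimulation_lift_path[OF R \<rho>(1,2)] by blast
  have "\<rho>' t \<in> A" if "t \<in> {0<..<1}" for t
    using \<rho>(4) invA[OF \<rho>'(3)[of t]] that by (auto simp: image_subset_iff)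
  moreover have "\<rho>' 1 \<in> B"
    using invB \<rho>'(3)[of 1] \<rho>(3) \<pi>(4) by simp
  moreover have "path_in (polyhedron K) \<rho>'"
    using \<rho>'(1) unfolding simplicial_path_def by blast
  ultimately show thesis
    using that \<rho>'(2) by blast
qed

lemma simplicial_bisimulation_sem_iff:
  assumes PM: "polyhedral_model K Val"
    and "simplicial_bisimulation K Val R" "(x, y) \<in> R"
  shows "x \<in> sem K Val \<phi> \<longleftrightarrow> y \<in> sem K Val \<phi>"
  using assms(2,3)
proof (induction \<phi> arbitrary: R x y)
  case (Atom p)
  then show ?case
    unfolding simplicial_bisimulation_def by auto
next
  case (Box \<phi>)
  have K: "simplicial_complex K"
    using PM unfolding polyhedral_model_def by blast
  have A: "cellular K (sem K Val \<phi>)"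
    unfolding cellular_def using Box.IH[OF same_cell_simplicial_bisimulation[OF PM]] by blast
  have inv: "\<And>u v. (u, v) \<in> R \<Longrightarrow> u \<in> sem K Val \<phi> \<longleftrightarrow> v \<in> sem K Val \<phi>"
    by (rule Box.IH[OF Box.prems(1)])
  then have inv': "\<And>u v. (u, v) \<in> R\<inverse> \<Longrightarrow> u \<in> sem K Val \<phi> \<longleftrightarrow> v \<in> sem K Val \<phi>"
    by blast
  have "(y, x) \<in> R\<inverse>"
    using Box.prems(2) by simp
  then show ?case
    using simplicial_bisimulation_interior_of[OF K Box.prems A inv]
      simplicial_bisimulation_interior_of[OF K simplicial_bisimulation_converse[OF Box.prems(1)] _ A inv']
    by auto
next
  case (Gamma \<phi> \<psi>)
  have K: "simplicial_complex K"
    using PM unfolding polyhedral_model_def by blast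
  have A: "cellular K (sem K Val \<phi>)"
    unfolding cellular_def using Gamma.IH(1)[OF same_cell_simplicial_bisimulation[OF PM]] by blast
  have inv: "\<And>u v. (u, v) \<in> R \<Longrightarrow> u \<in> sem K Val \<phi> \<longleftrightarrow> v \<in> sem K Val \<phi>"
      "\<And>u v. (u, v) \<in> R \<Longrightarrow> u \<in> sem K Val \<psi> \<longleftrightarrow> v \<in> sem K Val \<psi>"
    using Gamma.IH(1)[OF Gamma.prems(1)] Gamma.IH(2)[OF Gamma.prems(1)] by blast+
  then have inv': "\<And>u v. (u, v) \<in> R\<inverse> \<Longrightarrow> u \<in> sem K Val \<phi> \<longleftrightarrow> v \<in> sem K Val \<phi>"
      "\<And>u v. (u, v) \<in> R\<inverse> \<Longrightarrow> u \<in> sem K Val \<psi> \<longleftrightarrow> v \<in> sem K Val \<psi>"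
    by blast+
  have "(y, x) \<in> R\<inverse>"
    using Gamma.prems(2) by simp
  moreover have "x \<in> polyhedron K" "y \<in> polyhedron K"
    using Gamma.prems unfolding simplicial_bisimulation_def by blast+
  ultimately show ?case
    using simplicial_bisimulation_reach_path[OF K Gamma.prems A inv]
      simplicial_bisimulation_reach_path[OF K simplicial_bisimulation_converse[OF Gamma.prems(1)] _ A inv']
    by (simp, metis)
qed (auto simp: simplicial_bisimulation_def)

theorem mainTheorem14:
  fixes K :: "'a::euclidean_space set set"
    and Val :: "'p::finite \<Rightarrow> 'a set"
    and R :: "('a \<times> 'a) set"
  assumes "polyhedral_model K Val"
    and "simplicial_bisimulation K Val R"
    and "(x, y) \<in> R"
  shows "\<forall>\<phi>. models K Val x \<phi> \<longleftrightarrow> models K Val y \<phi>"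
  unfolding models_def using simplicial_bisimulation_sem_iff[OF assms] by blast

end
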